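(* Let $\mathrm{Lab}$ be a labelling system on a finite simplicial tree $T$ with index set $\{1,\dots,N\}$, and let $T_{\mathrm{spl}}$ be the union of the useful edges of $T$. If $T_{\mathrm{spl}}$ is nonempty, then $\bigcup_{v\in T_{\mathrm{spl}}}\mathrm{Lab}(v)=\{1,\dots,N\}$, the union being over vertices $v$ of $T_{\mathrm{spl}}$.
   Context: A labelling system on a finite simplicial tree $T$ assigns to each vertex $v$ a subset $\mathrm{Lab}(v)\subset\{1,\dots,N\}$ such that (A) $\mathrm{Lab}(a)\cap\mathrm{Lab}(b)\subset\mathrm{Lab}(x)$ whenever $x$ is a vertex on the shortest path between vertices $a,b$, and (B) $\bigcup_v\mathrm{Lab}(v)=\{1,\dots,N\}$. Removing the open edge $e$ leaves two closed connected components $T^+(e)$, $T^-(e)$. The edge $e$ is useless if $\bigcup_{v\in T^+(e)}\mathrm{Lab}(v)$ or $\bigcup_{v\in T^-(e)}\mathrm{Lab}(v)$ equals $\{1,\dots,N\}$, and useful otherwise. *)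

theory Defs
  imports Main
begin

definition simple_graph :: "'a set \<Rightarrow> ('a \<Rightarrow> 'a \<Rightarrow> bool) \<Rightarrow> bool" where
  "simple_graph V E \<longleftrightarrow> finite V \<and> (\<forall>x y. E x y \<longrightarrow> x \<in> V \<and> y \<in> V)
     \<and> (\<forall>x y. E x y \<longrightarrow> E y x) \<and> (\<forall>x. \<not> E x x)"

definition walk :: "('a \<Rightarrow> 'a \<Rightarrow> bool) \<Rightarrow> 'a list \<Rightarrow> 'a \<Rightarrow> 'a \<Rightarrow> bool" where
  "walk E p a b \<longleftrightarrow> p \<noteq> [] \<and> hd p = a \<and> last p = b
     \<and> (\<forall>i. Suc i < length p \<longrightarrow> E (p ! i) (p ! Suc i))"

definition is_cycle :: "('a \<Rightarrow> 'a \<Rightarrow> bool) \<Rightarrow> 'a list \<Rightarrow> bool" where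
  "is_cycle E c \<longleftrightarrow> length c \<ge> 3 \<and> distinct c
     \<and> (\<forall>i. Suc i < length c \<longrightarrow> E (c ! i) (c ! Suc i)) \<and> E (last c) (hd c)"

definition connected_graph :: "'a set \<Rightarrow> ('a \<Rightarrow> 'a \<Rightarrow> bool) \<Rightarrow> bool" where
  "connected_graph V E \<longleftrightarrow> (\<forall>a\<in>V. \<forall>b\<in>V. \<exists>p. walk E p a b)"

definition finite_tree :: "'a set \<Rightarrow> ('a \<Rightarrow> 'a \<Rightarrow> bool) \<Rightarrow> bool" where
  "finite_tree V E \<longleftrightarrow> simple_graph V E \<and> V \<noteq> {} \<and> connected_graph V E
     \<and> (\<nexists>c. is_cycle E c)"

definition on_geodesic :: "('a \<Rightarrow> 'a \<Rightarrow> bool) \<Rightarrow> 'a \<Rightarrow> 'a \<Rightarrow> 'a \<Rightarrow> bool" where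
  "on_geodesic E a b x \<longleftrightarrow> (\<exists>p. walk E p a b \<and> (\<forall>q. walk E q a b \<longrightarrow> length p \<le> length q)
     \<and> x \<in> set p)"

definition labelling_system ::
  "'a set \<Rightarrow> ('a \<Rightarrow> 'a \<Rightarrow> bool) \<Rightarrow> nat \<Rightarrow> ('a \<Rightarrow> nat set) \<Rightarrow> bool" where
  "labelling_system V E N Lab \<longleftrightarrow>
     (\<forall>a\<in>V. \<forall>b\<in>V. \<forall>x\<in>V. on_geodesic E a b x \<longrightarrow> Lab a \<inter> Lab b \<subseteq> Lab x)
     \<and> (\<Union>v\<in>V. Lab v) = {1..N}"

definition remove_edge :: "('a \<Rightarrow> 'a \<Rightarrow> bool) \<Rightarrow> 'a \<Rightarrow> 'a \<Rightarrow> 'a \<Rightarrow> 'a \<Rightarrow> bool" where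
  "remove_edge E u v x y \<longleftrightarrow> E x y \<and> {x, y} \<noteq> {u, v}"

text \<open>The closed component containing u of T minus the open edge {u,v}.\<close>
definition side :: "('a \<Rightarrow> 'a \<Rightarrow> bool) \<Rightarrow> 'a \<Rightarrow> 'a \<Rightarrow> 'a set" where
  "side E u v = {w. (remove_edge E u v)\<^sup>*\<^sup>* u w}"

definition useful_edge ::
  "('a \<Rightarrow> 'a \<Rightarrow> bool) \<Rightarrow> nat \<Rightarrow> ('a \<Rightarrow> nat set) \<Rightarrow> 'a \<Rightarrow> 'a \<Rightarrow> bool" where
  "useful_edge E N Lab u v \<longleftrightarrow> E u v
     \<and> (\<Union>w\<in>side E u v. Lab w) \<noteq> {1..N} \<and> (\<Union>w\<in>side E v u. Lab w) \<noteq> {1..N}"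

definition T_spl_vertices ::
  "('a \<Rightarrow> 'a \<Rightarrow> bool) \<Rightarrow> nat \<Rightarrow> ('a \<Rightarrow> nat set) \<Rightarrow> 'a set" where
  "T_spl_vertices E N Lab = {w. \<exists>u v. useful_edge E N Lab u v \<and> (w = u \<or> w = v)}"

end

theory Submission
  imports Defs "HOL-Library.Transitive_Closure_Table"
begin

text \<open>
  Fix a label i and a useful edge.  Some vertex w carries i; it lies on one
  side of the useful edge.  Orient the edge as a \<rightarrow> b with w in the b-side and walk from
  a towards w, keeping the invariant: the b-side of the current edge a \<rightarrow> b does not carry
  all labels, it contains w, and i \<notin> Lab a.  If i \<in> Lab b, then by convexity of labels
  (axiom (A)) no vertex on the a-side carries i, so the a-side is not full either: {a,b} is a
  useful edge and b \<in> T_spl carries i.  Otherwise step to the neighbour c of b towards w;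
  the c-side of b \<rightarrow> c is a proper subset of the b-side of a \<rightarrow> b, so the invariant is
  kept and the side strictly shrinks, which bounds the walk.
\<close>

lemma walk_Cons_Cons:
  "walk E (x # y # q) a b \<longleftrightarrow> x = a \<and> E x y \<and> walk E (y # q) y b"
  unfolding walk_def by (auto simp: nth_Cons split: nat.splits)

lemma walk_Cons_iff_path: "walk E (a # xs) a b \<longleftrightarrow> rtrancl_path E a xs b"
proof (induction xs arbitrary: a)
  case Nil
  show ?case unfolding walk_def by (auto intro: rtrancl_path.base elim: rtrancl_path.cases)
next
  case (Cons y ys)
  then show ?case by (auto simp: walk_Cons_Cons intro: rtrancl_path.step elim: rtrancl_path.cases)
qed

lemma walk_iff_path: "walk E p a b \<longleftrightarrow> (\<exists>xs. p = a # xs \<and> rtrancl_path E a xs b)"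
  by (metis walk_Cons_iff_path walk_def list.collapse)

lemma walk_imp_rtranclp: "walk E p a b \<Longrightarrow> E\<^sup>*\<^sup>* a b"
  by (metis walk_iff_path rtranclp_eq_rtrancl_path)

section \<open>The two sides of an edge\<close>

lemma side_refl: "u \<in> side E u v"
  unfolding side_def by simp

lemma side_step: "w \<in> side E u v \<Longrightarrow> E w w' \<Longrightarrow> {w, w'} \<noteq> {u, v} \<Longrightarrow> w' \<in> side E u v"
  unfolding side_def remove_edge_def by (auto intro: rtranclp.rtrancl_into_rtrancl)

lemma side_subset:
  assumes "simple_graph V E" "u \<in> V"
  shows "side E u v \<subseteq> V"
proof
  fix w assume "w \<in> side E u v"
  then have "(remove_edge E u v)\<^sup>*\<^sup>* u w" unfolding side_def by simp
  then show "w \<in> V"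
    by (induction rule: rtranclp_induct) (use assms in \<open>auto simp: remove_edge_def simple_graph_def\<close>)
qed

lemma reachable_in_sides:
  assumes "E\<^sup>*\<^sup>* u w"
  shows "w \<in> side E u v \<union> side E v u"
  using assms
proof (induction rule: rtranclp_induct)
  case base
  then show ?case by (simp add: side_refl)
next
  case (step y w)
  show ?case
  proof (cases "{y, w} = {u, v}")
    case True
    then show ?thesis using side_refl[of u E v] side_refl[of v E u] by (auto simp: doubleton_eq_iff)
  next
    case False
    then have "{y, w} \<noteq> {v, u}" by (auto simp: doubleton_eq_iff)
    then show ?thesis using step side_step[of y E u v w] side_step[of y E v u w] False by blast
  qed
qed

lemma side_neighbour:
  assumes "w \<in> side E b a"
  shows "w = b \<or> (\<exists>c. E b c \<and> c \<noteq> a \<and> w \<in> side E c b)"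
proof -
  have "(remove_edge E b a)\<^sup>*\<^sup>* b w" using assms unfolding side_def by simp
  then show ?thesis
  proof (induction rule: rtranclp_induct)
    case base
    then show ?case by simp
  next
    case (step w w')
    from step(2) have E: "E w w'" and ne: "{w, w'} \<noteq> {b, a}" unfolding remove_edge_def by auto
    from step(3) show ?case
    proof
      assume "w = b"
      then show ?thesis using E ne side_refl[of w' E b] by (auto simp: doubleton_eq_iff)
    next
      assume "\<exists>c. E b c \<and> c \<noteq> a \<and> w \<in> side E c b"
      then obtain c where c: "E b c" "c \<noteq> a" "w \<in> side E c b" by blast
      show ?thesis
      proof (cases "{w, w'} = {c, b}")
        case True
        then have "w' = b \<or> w' = c" by (auto simp: doubleton_eq_iff)
        then show ?thesis using c side_refl[of c E b] by blast
      next
        case False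
        then show ?thesis using c side_step[OF c(3) E] by blast
      qed
    qed
  qed
qed

lemma path_leaving_side_visits_endpoint:
  assumes "rtrancl_path E y xs z" "y \<in> side E a b" "z \<notin> side E a b"
  shows "a \<in> set (y # xs)"
  using assms
proof (induction rule: rtrancl_path.induct)
  case (base x)
  then show ?case by simp
next
  case (step x y' ys z)
  show ?case
  proof (cases "y' \<in> side E a b")
    case True
    then show ?thesis using step by auto
  next
    case False
    then have "{x, y'} = {a, b}" using side_step[of x E a b y'] step by blast
    with False side_refl[of a E b] have "x = a" by (auto simp: doubleton_eq_iff)
    then show ?thesis by simp
  qed
qed

section \<open>Sides in an acyclic graph\<close>

text \<open>Without cycles, removing an edge disconnects its endpoints: a path from a to b
  avoiding the edge {a,b} would close up with it to a cycle.\<close>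
lemma endpoint_not_in_other_side:
  assumes G: "simple_graph V E" and acyclic: "\<nexists>c. is_cycle E c" and ab: "E a b"
  shows "b \<notin> side E a b"
proof
  assume "b \<in> side E a b"
  then have "(remove_edge E a b)\<^sup>*\<^sup>* a b" unfolding side_def by simp
  then obtain xs where "rtrancl_path (remove_edge E a b) a xs b"
    using rtranclp_eq_rtrancl_path by metis
  then obtain ys where p: "rtrancl_path (remove_edge E a b) a ys b" and d: "distinct (a # ys)"
    by (rule rtrancl_path_distinct)
  have "a \<noteq> b" "E b a" using ab G unfolding simple_graph_def by blast+
  have pE: "rtrancl_path E a ys b"
    using p by (induction rule: rtrancl_path.induct) (auto simp: remove_edge_def intro: rtrancl_path.intros)
  then have w: "walk E (a # ys) a b" by (simp add: walk_Cons_iff_path)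
  have "length ys \<ge> 2"
  proof -
    have "ys \<noteq> []" using p \<open>a \<noteq> b\<close> by (auto elim: rtrancl_path.cases)
    moreover have "ys \<noteq> [b]"
      using p by (auto simp: remove_edge_def elim!: rtrancl_path.cases)
    moreover have "ys \<noteq> [c]" if "c \<noteq> b" for c using w that unfolding walk_def by auto
    ultimately show ?thesis by (cases ys; cases "tl ys") auto
  qed
  then have "is_cycle E (a # ys)"
    using d w \<open>E b a\<close> unfolding is_cycle_def walk_def by auto
  then show False using acyclic by blast
qed

lemma side_shrinks:
  assumes G: "simple_graph V E" and acyclic: "\<nexists>c. is_cycle E c"
    and ab: "E a b" and bc: "E b c" and ca: "c \<noteq> a"
  shows "side E c b \<subset> side E b a"
proof -
  have cb: "E c b" using bc G unfolding simple_graph_def by blast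
  have nb: "b \<notin> side E c b" by (rule endpoint_not_in_other_side[OF G acyclic cb])
  have "side E c b \<subseteq> side E b a"
  proof
    fix x assume "x \<in> side E c b"
    then have "(remove_edge E c b)\<^sup>*\<^sup>* c x" unfolding side_def by simp
    then have "(remove_edge E b a)\<^sup>*\<^sup>* c x \<and> x \<in> side E c b"
    proof (induction rule: rtranclp_induct)
      case base
      then show ?case by (simp add: side_refl)
    next
      case (step y w)
      have "y \<noteq> b" using step nb by blast
      moreover have "y \<noteq> a"
      proof
        assume "y = a"
        then have "{y, b} \<noteq> {c, b}" using ca by (auto simp: doubleton_eq_iff)
        then have "b \<in> side E c b" using side_step step ab \<open>y = a\<close> by metis
        then show False using nb by simp
      qed
      ultimately have "remove_edge E b a y w"
        using step(2) unfolding remove_edge_def by (auto simp: doubleton_eq_iff)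
      moreover have "w \<in> side E c b"
        using step unfolding side_def by (auto intro: rtranclp.rtrancl_into_rtrancl)
      ultimately show ?case using step by (auto intro: rtranclp.rtrancl_into_rtrancl)
    qed
    moreover have "remove_edge E b a b c"
      using bc ca unfolding remove_edge_def by (auto simp: doubleton_eq_iff)
    ultimately show "x \<in> side E b a"
      unfolding side_def by (auto intro: converse_rtranclp_into_rtranclp)
  qed
  then show ?thesis using nb side_refl[of b E a] by blast
qed

text \<open>Convexity: a label shared by vertices on opposite sides of the edge {a,b} is carried
  by a, since a lies on a geodesic between them.\<close>
lemma label_across_edge:
  assumes T: "finite_tree V E" and L: "labelling_system V E N Lab" and ab: "E a b"
    and y: "y \<in> V" "y \<in> side E a b" and z: "z \<in> V" "z \<notin> side E a b"
  shows "Lab y \<inter> Lab z \<subseteq> Lab a"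
proof -
  obtain p0 where "walk E p0 y z"
    using T y z unfolding finite_tree_def connected_graph_def by blast
  then obtain p where p: "walk E p y z" and shortest: "\<forall>q. walk E q y z \<longrightarrow> length p \<le> length q"
    using ex_has_least_nat[of "\<lambda>p. walk E p y z" p0 length] by blast
  then have "a \<in> set p"
    using path_leaving_side_visits_endpoint y z by (metis walk_iff_path)
  then have "on_geodesic E y z a" unfolding on_geodesic_def using p shortest by blast
  moreover have "a \<in> V" using T ab unfolding finite_tree_def simple_graph_def by blast
  ultimately show ?thesis using L y z unfolding labelling_system_def by blast
qed

lemma useful_edge_at_label_entry:
  assumes T: "finite_tree V E" and L: "labelling_system V E N Lab" and ab: "E a b"
    and i: "i \<in> {1..N}" "i \<notin> Lab a" "i \<in> Lab b"
    and far_side: "(\<Union>x\<in>side E b a. Lab x) \<noteq> {1..N}"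
  shows "useful_edge E N Lab a b"
proof -
  have G: "simple_graph V E" and acyclic: "\<nexists>c. is_cycle E c"
    using T unfolding finite_tree_def by auto
  have aV: "a \<in> V" and bV: "b \<in> V" using G ab unfolding simple_graph_def by auto
  have "i \<notin> Lab x" if x: "x \<in> side E a b" for x
  proof
    assume "i \<in> Lab x"
    have "b \<notin> side E a b" by (rule endpoint_not_in_other_side[OF G acyclic ab])
    then have "Lab x \<inter> Lab b \<subseteq> Lab a"
      using label_across_edge[OF T L ab _ x bV] side_subset[OF G aV] x by blast
    then show False using \<open>i \<in> Lab x\<close> i by blast
  qed
  then have "(\<Union>x\<in>side E a b. Lab x) \<noteq> {1..N}" using i(1) by blast
  then show ?thesis using ab far_side unfolding useful_edge_def by blast
qed

section \<open>The descent towards a vertex carrying a label\<close>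

lemma descent_to_useful_vertex:
  assumes T: "finite_tree V E" and L: "labelling_system V E N Lab" and i: "i \<in> {1..N}"
    and w: "i \<in> Lab w"
    and ab: "E a b" and far_side: "(\<Union>x\<in>side E b a. Lab x) \<noteq> {1..N}"
    and near: "i \<notin> Lab a" and w_side: "w \<in> side E b a"
  shows "\<exists>x\<in>T_spl_vertices E N Lab. i \<in> Lab x"
  using ab far_side near w_side
proof (induction "card (side E b a)" arbitrary: a b rule: less_induct)
  case less
  have G: "simple_graph V E" and acyclic: "\<nexists>c. is_cycle E c"
    using T unfolding finite_tree_def by auto
  have bV: "b \<in> V" and finV: "finite V"
    using G less.prems(1) unfolding simple_graph_def by blast+
  have all_labels: "(\<Union>v\<in>V. Lab v) = {1..N}" using L unfolding labelling_system_def by blast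
  show ?case
  proof (cases "i \<in> Lab b")
    case True
    then have "useful_edge E N Lab a b"
      using useful_edge_at_label_entry[OF T L less.prems(1) i less.prems(3)] less.prems(2) by blast
    then have "b \<in> T_spl_vertices E N Lab" unfolding T_spl_vertices_def by blast
    then show ?thesis using True by blast
  next
    case False
    with w have "w \<noteq> b" by blast
    then obtain c where c: "E b c" "c \<noteq> a" "w \<in> side E c b"
      using side_neighbour[OF less.prems(4)] by blast
    have shrink: "side E c b \<subset> side E b a"
      by (rule side_shrinks[OF G acyclic less.prems(1) c(1,2)])
    have "finite (side E b a)" using finite_subset[OF side_subset[OF G bV] finV] .
    then have smaller: "card (side E c b) < card (side E b a)" using shrink by (rule psubset_card_mono)
    have "(\<Union>x\<in>side E c b. Lab x) \<subseteq> (\<Union>x\<in>side E b a. Lab x)"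
      using shrink by (intro UN_mono) auto
    moreover have "(\<Union>x\<in>side E b a. Lab x) \<subseteq> {1..N}"
      using all_labels side_subset[OF G bV, of a] by auto
    ultimately have "(\<Union>x\<in>side E c b. Lab x) \<noteq> {1..N}" using less.prems(2) by auto
    from less.hyps[OF smaller c(1) this False c(3)] show ?thesis .
  qed
qed

lemma useful_edge_sym:
  assumes "simple_graph V E" "useful_edge E N Lab u v"
  shows "useful_edge E N Lab v u"
  using assms unfolding useful_edge_def simple_graph_def by blast

text \<open>Every label occurs on T_spl: start the descent from a useful edge, oriented so
  that a vertex carrying the label lies on its far side.\<close>
lemma label_on_T_spl:
  assumes T: "finite_tree V E" and L: "labelling_system V E N Lab"
    and nonempty: "T_spl_vertices E N Lab \<noteq> {}" and i: "i \<in> {1..N}"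
  shows "\<exists>x\<in>T_spl_vertices E N Lab. i \<in> Lab x"
proof -
  have G: "simple_graph V E" using T unfolding finite_tree_def by simp
  have all_labels: "(\<Union>v\<in>V. Lab v) = {1..N}" using L unfolding labelling_system_def by blast
  obtain w where w: "w \<in> V" "i \<in> Lab w" using i all_labels by blast
  obtain u0 v0 where uv0: "useful_edge E N Lab u0 v0"
    using nonempty unfolding T_spl_vertices_def by blast
  have "E u0 v0" using uv0 unfolding useful_edge_def by blast
  with G have "u0 \<in> V" unfolding simple_graph_def by blast
  then obtain p where "walk E p u0 w"
    using T w(1) unfolding finite_tree_def connected_graph_def by blast
  then have "w \<in> side E u0 v0 \<union> side E v0 u0"
    by (intro reachable_in_sides walk_imp_rtranclp)
  then obtain u v where uv: "useful_edge E N Lab u v" and w_side: "w \<in> side E v u"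
    using uv0 useful_edge_sym[OF G uv0] by blast
  show ?thesis
  proof (cases "i \<in> Lab u")
    case True
    then show ?thesis using uv unfolding T_spl_vertices_def by blast
  next
    case False
    from uv have "E u v" and "(\<Union>x\<in>side E v u. Lab x) \<noteq> {1..N}"
      unfolding useful_edge_def by blast+
    from descent_to_useful_vertex[OF T L i w(2) this False w_side] show ?thesis .
  qed
qed

theorem mainTheorem12:
  fixes V :: "'a set" and E :: "'a \<Rightarrow> 'a \<Rightarrow> bool" and N :: nat and Lab :: "'a \<Rightarrow> nat set"
  assumes "finite_tree V E"
    and "labelling_system V E N Lab"
    and "T_spl_vertices E N Lab \<noteq> {}"
  shows "(\<Union>v\<in>T_spl_vertices E N Lab. Lab v) = {1..N}"
proof
  have "simple_graph V E" using assms(1) unfolding finite_tree_def by simp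
  then have "T_spl_vertices E N Lab \<subseteq> V"
    unfolding T_spl_vertices_def useful_edge_def simple_graph_def by blast
  then show "(\<Union>v\<in>T_spl_vertices E N Lab. Lab v) \<subseteq> {1..N}"
    using assms(2) unfolding labelling_system_def by blast
  show "{1..N} \<subseteq> (\<Union>v\<in>T_spl_vertices E N Lab. Lab v)"
    using label_on_T_spl[OF assms] by blast
qed

end
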